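(* Let $(G,u,v,\alpha,\beta)$ be a Guvab with $\lim_{k\to\infty}W_k=0$. If there exists $N\ge0$ such that $\{W_k\}_{k\ge N}$ is a constant sequence, then $\{W_k\}_{k\ge1}$ is a constant sequence.
   Context: A Guvab is a tuple $(G,u,v,\alpha,\beta)$ where $G$ is a finite, connected, simple graph, $u,v\in V(G)$, and $\alpha,\beta\in[0,1]$ with $\alpha\le\beta$. A random walk on $G$ with starting vertex $w$ and laziness $\gamma$ is the Markov chain $R_0=w$ and, for $i\ge1$, $R_i=R_{i-1}$ with probability $\gamma$ and $R_i=t$ with probability $\frac{1-\gamma}{\deg(R_{i-1})}$ for each neighbor $t$ of $R_{i-1}$. $\mu_k$ is the distribution after $k$ steps of the walk from $u$ with laziness $\alpha$, $\nu_k$ that of the walk from $v$ with laziness $\beta$, and $W_k=W(\mu_k,\nu_k)$ is the Wasserstein ($L^1$ optimal transport) distance with respect to the graph distance. *)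

theory Defs
  imports "HOL-Analysis.Analysis"
begin

definition edge_rel :: "('a \<Rightarrow> 'a \<Rightarrow> bool) \<Rightarrow> ('a \<times> 'a) set" where
  "edge_rel E = {(x, y). E x y}"

definition fin_conn_simple_graph :: "'a set \<Rightarrow> ('a \<Rightarrow> 'a \<Rightarrow> bool) \<Rightarrow> bool" where
  "fin_conn_simple_graph V E \<longleftrightarrow>
     finite V \<and> V \<noteq> {} \<and>
     (\<forall>x y. E x y \<longrightarrow> x \<in> V \<and> y \<in> V) \<and>
     (\<forall>x y. E x y \<longrightarrow> E y x) \<and>
     (\<forall>x. \<not> E x x) \<and>
     (\<forall>x\<in>V. \<forall>y\<in>V. (x, y) \<in> (edge_rel E)\<^sup>*)"

definition deg :: "'a set \<Rightarrow> ('a \<Rightarrow> 'a \<Rightarrow> bool) \<Rightarrow> 'a \<Rightarrow> nat" where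
  "deg V E x = card {y \<in> V. E x y}"

definition gdist :: "('a \<Rightarrow> 'a \<Rightarrow> bool) \<Rightarrow> 'a \<Rightarrow> 'a \<Rightarrow> nat" where
  "gdist E x y = (LEAST n. (x, y) \<in> (edge_rel E) ^^ n)"

fun walk_dist :: "'a set \<Rightarrow> ('a \<Rightarrow> 'a \<Rightarrow> bool) \<Rightarrow> real \<Rightarrow> 'a \<Rightarrow> nat \<Rightarrow> 'a \<Rightarrow> real" where
  "walk_dist V E \<gamma> w 0 = (\<lambda>y. if y = w then 1 else 0)"
| "walk_dist V E \<gamma> w (Suc k) = (\<lambda>y.
      \<gamma> * walk_dist V E \<gamma> w k y
      + (\<Sum>x\<in>{x \<in> V. E x y}. walk_dist V E \<gamma> w k x * (1 - \<gamma>) / real (deg V E x)))"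

definition couplings :: "'a set \<Rightarrow> ('a \<Rightarrow> real) \<Rightarrow> ('a \<Rightarrow> real) \<Rightarrow> ('a \<times> 'a \<Rightarrow> real) set" where
  "couplings V \<mu> \<nu> = {\<pi>. (\<forall>p. \<pi> p \<ge> 0) \<and> (\<forall>p. p \<notin> V \<times> V \<longrightarrow> \<pi> p = 0) \<and>
      (\<forall>x\<in>V. (\<Sum>y\<in>V. \<pi> (x, y)) = \<mu> x) \<and>
      (\<forall>y\<in>V. (\<Sum>x\<in>V. \<pi> (x, y)) = \<nu> y)}"

definition wasserstein :: "'a set \<Rightarrow> ('a \<Rightarrow> 'a \<Rightarrow> bool) \<Rightarrow> ('a \<Rightarrow> real) \<Rightarrow> ('a \<Rightarrow> real) \<Rightarrow> real" where
  "wasserstein V E \<mu> \<nu> =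
     (INF \<pi>\<in>couplings V \<mu> \<nu>. \<Sum>p\<in>V \<times> V. \<pi> p * real (gdist E (fst p) (snd p)))"

definition W_seq :: "'a set \<Rightarrow> ('a \<Rightarrow> 'a \<Rightarrow> bool) \<Rightarrow> 'a \<Rightarrow> 'a \<Rightarrow> real \<Rightarrow> real \<Rightarrow> nat \<Rightarrow> real" where
  "W_seq V E u v \<alpha> \<beta> k = wasserstein V E (walk_dist V E \<alpha> u k) (walk_dist V E \<beta> v k)"

end

theory Submission
  imports Defs "HOL-Library.Function_Algebras"
begin

(* Since W_k tends to 0 and is eventually constant, W_k = 0 for large k, and the lower bound
   |mu_k x - nu_k x| <= W_k gives mu_k = nu_k from some N on. Both walks are orbits of a single
   linear operator M: the two lazy walk operators acting side by side on two copies of V. The lazy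
   walk operator is self-adjoint for the inner product weighted by 1/deg, so ker M^2 = ker M, and
   therefore the orbit M^k z, k >= 1, obeys a linear recurrence with non-zero constant coefficient.
   Such a recurrence can be run backwards, so mu_k x - nu_k x, which vanishes for k >= N, vanishes
   for all k >= 1, and then W_k = W(mu_k, mu_k) = 0. A graph with an isolated vertex is a single
   vertex; there the claim is checked directly. *)

lemma linear_recurrence_zero_if_eventually_zero:
  fixes g c :: "nat \<Rightarrow> 'a::field"
  assumes rec: "\<And>j. g (j + d) = (\<Sum>i<d. c i * g (i + j))"
    and lead: "d = 0 \<or> c 0 \<noteq> 0"
    and tail: "\<And>j. N \<le> j \<Longrightarrow> g j = 0"
  shows "g j = 0"
  using tail
proof (induction N)
  case 0
  then show ?case by simp
next
  case (Suc N)
  have "g N = 0"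
  proof (cases "d = 0")
    case True
    then show ?thesis using rec[of N] by simp
  next
    case False
    then obtain d' where d: "d = Suc d'" and "c 0 \<noteq> 0" using lead not0_implies_Suc by blast
    have "0 = g (N + d)" using Suc.prems d by simp
    also have "\<dots> = c 0 * g N + (\<Sum>i<d'. c (Suc i) * g (Suc i + N))"
      using rec[of N] unfolding d sum.lessThan_Suc_shift by simp
    also have "(\<Sum>i<d'. c (Suc i) * g (Suc i + N)) = 0"
      using Suc.prems by (intro sum.neutral) auto
    finally show ?thesis using \<open>c 0 \<noteq> 0\<close> by simp
  qed
  with Suc.prems have "g j = 0" if "N \<le> j" for j
    using that by (cases "j = N") auto
  then show ?case by (rule Suc.IH)
qed

context vector_space
begin

lemma independent_if_not_in_span_of_predecessors:
  fixes K :: "nat \<Rightarrow> 'b"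
  assumes "\<And>d. d < m \<Longrightarrow> K d \<notin> span (K ` {..<d})"
  shows "independent (K ` {..<m}) \<and> card (K ` {..<m}) = m"
  using assms
proof (induction m)
  case 0
  then show ?case by (simp add: independent_empty)
next
  case (Suc m)
  have IH: "independent (K ` {..<m})" "card (K ` {..<m}) = m"
    using Suc.IH Suc.prems by simp_all
  have new: "K m \<notin> span (K ` {..<m})" using Suc.prems by simp
  then have "K m \<notin> K ` {..<m}" by (rule contrapos_nn) (rule span_base)
  moreover have "K ` {..<Suc m} = insert (K m) (K ` {..<m})" by (simp add: lessThan_Suc)
  ultimately show ?case
    using IH new by (simp add: independent_insertI)
qed

lemma ex_in_span_of_predecessors:
  fixes K :: "nat \<Rightarrow> 'b"
  assumes "finite B" and "range K \<subseteq> span B"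
  shows "\<exists>d. K d \<in> span (K ` {..<d})"
proof (rule ccontr)
  assume none: "\<nexists>d. K d \<in> span (K ` {..<d})"
  have "independent (K ` {..<Suc (card B)}) \<and> card (K ` {..<Suc (card B)}) = Suc (card B)"
    by (rule independent_if_not_in_span_of_predecessors) (use none in simp)
  moreover have "K ` {..<Suc (card B)} \<subseteq> span B"
    using image_mono[OF subset_UNIV] assms(2) by (rule order_trans)
  ultimately have "card (K ` {..<Suc (card B)}) \<le> card B"
    using independent_span_bound[OF assms(1)] by blast
  then show False
    using \<open>independent _ \<and> card _ = Suc (card B)\<close> by simp
qed

lemma in_span_image_lessThan_iff:
  fixes K :: "nat \<Rightarrow> 'b"
  shows "x \<in> span (K ` {..<d}) \<longleftrightarrow> (\<exists>c. x = (\<Sum>i<d. scale (c i) (K i)))"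
proof (induction d arbitrary: x)
  case 0
  then show ?case by simp
next
  case (Suc d)
  have "x \<in> span (K ` {..<Suc d}) \<longleftrightarrow> (\<exists>k. x - scale k (K d) \<in> span (K ` {..<d}))"
    by (simp add: lessThan_Suc span_breakdown_eq)
  also have "\<dots> \<longleftrightarrow> (\<exists>k c. x - scale k (K d) = (\<Sum>i<d. scale (c i) (K i)))"
    by (simp add: Suc.IH)
  also have "\<dots> \<longleftrightarrow> (\<exists>c. x = (\<Sum>i<Suc d. scale (c i) (K i)))"
  proof
    assume "\<exists>k c. x - scale k (K d) = (\<Sum>i<d. scale (c i) (K i))"
    then obtain k c where "x - scale k (K d) = (\<Sum>i<d. scale (c i) (K i))" by blast
    then have "x = (\<Sum>i<Suc d. scale ((c(d := k)) i) (K i))" by (simp add: diff_eq_eq)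
    then show "\<exists>c. x = (\<Sum>i<Suc d. scale (c i) (K i))" by blast
  next
    assume "\<exists>c. x = (\<Sum>i<Suc d. scale (c i) (K i))"
    then obtain c where "x = (\<Sum>i<d. scale (c i) (K i)) + scale (c d) (K d)" by auto
    then have "x - scale (c d) (K d) = (\<Sum>i<d. scale (c i) (K i))" by simp
    then show "\<exists>k c. x - scale k (K d) = (\<Sum>i<d. scale (c i) (K i))" by blast
  qed
  finally show ?case .
qed

lemma linear_funpow:
  assumes "Vector_Spaces.linear scale scale M"
  shows "Vector_Spaces.linear scale scale (M ^^ n)"
  by (induction n) (simp_all add: linear_ident Vector_Spaces.linear_compose[OF _ assms, unfolded comp_def])

(* The minimal polynomial of M on the Krylov space of M z has non-zero constant term,
   because M is injective on range M. *)
lemma orbit_linear_recurrence: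
  assumes lin: "Vector_Spaces.linear scale scale M" and "finite B" and "range M \<subseteq> span B"
    and ker: "\<And>x. M (M x) = 0 \<Longrightarrow> M x = 0"
  obtains d c where "d = 0 \<or> c 0 \<noteq> 0"
    and "\<And>j. (M ^^ (j + d)) (M z) = (\<Sum>i<d. scale (c i) ((M ^^ (i + j)) (M z)))"
proof -
  have hom: "module_hom scale scale M" using lin by (simp add: module_hom_iff_linear)
  define K where "K j = (M ^^ j) (M z)" for j
  have K_Suc: "K (Suc j) = M (K j)" for j by (simp add: K_def)
  have K_range: "K j \<in> range M" for j unfolding K_def funpow_swap1[symmetric] by simp
  define d where "d = (LEAST d. K d \<in> span (K ` {..<d}))"
  have "K d \<in> span (K ` {..<d})"
    unfolding d_def
  proof (rule LeastI_ex, rule ex_in_span_of_predecessors[OF \<open>finite B\<close>])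
    show "range K \<subseteq> span B" using K_range assms(3) by auto
  qed
  then obtain c where c: "K d = (\<Sum>i<d. scale (c i) (K i))"
    unfolding in_span_image_lessThan_iff by blast
  have minimal: "K e \<notin> span (K ` {..<e})" if "e < d" for e
    using that unfolding d_def by (rule not_less_Least)
  have "d = 0 \<or> c 0 \<noteq> 0"
  proof (rule ccontr)
    assume "\<not> (d = 0 \<or> c 0 \<noteq> 0)"
    then obtain d' where d: "d = Suc d'" and "c 0 = 0" by (cases d) auto
    define y where "y = K d' - (\<Sum>i<d'. scale (c (Suc i)) (K i))"
    have "M y = K d - (\<Sum>i<d'. scale (c (Suc i)) (K (Suc i)))"
      by (simp add: y_def module_hom.diff[OF hom] module_hom.sum[OF hom] module_hom.scale[OF hom] K_Suc d)
    also have "\<dots> = 0" using c \<open>c 0 = 0\<close> unfolding d sum.lessThan_Suc_shift by simp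
    finally have "M y = 0" .
    moreover have "y \<in> range M"
      unfolding y_def using module_hom.subspace_image[OF hom subspace_UNIV] K_range
      by (intro subspace_diff subspace_sum subspace_scale)
    ultimately have "y = 0" using ker by auto
    then have "K d' \<in> span (K ` {..<d'})"
      unfolding in_span_image_lessThan_iff y_def by auto
    then show False using minimal d by simp
  qed
  moreover have "(M ^^ (j + d)) (M z) = (\<Sum>i<d. scale (c i) ((M ^^ (i + j)) (M z)))" for j
  proof -
    have hom_j: "module_hom scale scale (M ^^ j)"
      using linear_funpow[OF lin] by (simp add: module_hom_iff_linear)
    have shift: "(M ^^ (i + j)) w = (M ^^ j) ((M ^^ i) w)" for i w
      by (simp add: funpow_add add.commute[of i j])
    have "(M ^^ (j + d)) (M z) = (M ^^ j) (K d)" by (simp add: K_def funpow_add)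
    also have "\<dots> = (\<Sum>i<d. scale (c i) ((M ^^ j) (K i)))"
      by (simp add: c module_hom.sum[OF hom_j] module_hom.scale[OF hom_j])
    also have "\<dots> = (\<Sum>i<d. scale (c i) ((M ^^ (i + j)) (M z)))"
      by (simp add: K_def shift)
    finally show ?thesis .
  qed
  ultimately show ?thesis using that by blast
qed

lemma orbit_functional_vanishes_if_eventually:
  assumes "Vector_Spaces.linear scale scale M" and "finite B" and "range M \<subseteq> span B"
    and "\<And>x. M (M x) = 0 \<Longrightarrow> M x = 0"
    and \<phi>: "Vector_Spaces.linear scale (*) \<phi>"
    and tail: "\<And>k. N \<le> k \<Longrightarrow> \<phi> ((M ^^ k) z) = 0" and "0 < k"
  shows "\<phi> ((M ^^ k) z) = 0"
proof -
  obtain d c where lead: "d = 0 \<or> c 0 \<noteq> 0"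
    and rec: "\<And>j. (M ^^ (j + d)) (M z) = (\<Sum>i<d. scale (c i) ((M ^^ (i + j)) (M z)))"
    using orbit_linear_recurrence[OF assms(1-4)] by blast
  have hom: "module_hom scale (*) \<phi>" using \<phi> by (simp add: module_hom_iff_linear)
  have orbit_Suc: "(M ^^ j) (M z) = (M ^^ Suc j) z" for j
    by (simp add: funpow_swap1)
  define g where "g j = \<phi> ((M ^^ j) (M z))" for j
  have rec_g: "g (j + d) = (\<Sum>i<d. c i * g (i + j))" for j
    by (simp only: g_def rec module_hom.sum[OF hom] module_hom.scale[OF hom])
  have tail_g: "g j = 0" if "N \<le> j" for j
    using tail[of "Suc j"] that unfolding g_def orbit_Suc by simp
  have "g (k - 1) = 0"
    using rec_g lead tail_g by (rule linear_recurrence_zero_if_eventually_zero)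
  then show ?thesis using \<open>0 < k\<close> by (simp add: g_def orbit_Suc)
qed

end

definition fun_scale :: "'a::field \<Rightarrow> ('b \<Rightarrow> 'a) \<Rightarrow> 'b \<Rightarrow> 'a" where
  "fun_scale c f = (\<lambda>x. c * f x)"

interpretation fun_space: vector_space fun_scale
  by unfold_locales (auto simp: fun_scale_def algebra_simps)

lemma sum_fun_apply: "(\<Sum>i\<in>A. f i) x = (\<Sum>i\<in>A. f i x)"
  by (induction A rule: infinite_finite_induct) auto

lemma in_span_deltas:
  assumes "finite S" and "\<And>x. x \<notin> S \<Longrightarrow> f x = 0"
  shows "f \<in> fun_space.span ((\<lambda>s x. if x = s then 1 else 0) ` S)"
proof -
  have "f = (\<Sum>s\<in>S. fun_scale (f s) (\<lambda>x. if x = s then 1 else 0))"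
    using assms by (auto simp: fun_eq_iff sum_fun_apply fun_scale_def if_distrib cong: if_cong)
  also have "\<dots> \<in> fun_space.span ((\<lambda>s x. if x = s then 1 else 0) ` S)"
    by (intro fun_space.span_sum fun_space.span_scale fun_space.span_base) simp
  finally show ?thesis .
qed

lemma fin_conn_simple_graphD:
  assumes "fin_conn_simple_graph V E"
  shows "finite V" and "E x y \<Longrightarrow> x \<in> V" and "E x y \<Longrightarrow> y \<in> V" and "E x y \<Longrightarrow> E y x"
    and "\<not> E x x" and "x \<in> V \<Longrightarrow> y \<in> V \<Longrightarrow> (x, y) \<in> (edge_rel E)\<^sup>*"
  using assms unfolding fin_conn_simple_graph_def by blast+

definition walk_step :: "'a set \<Rightarrow> ('a \<Rightarrow> 'a \<Rightarrow> bool) \<Rightarrow> real \<Rightarrow> ('a \<Rightarrow> real) \<Rightarrow> 'a \<Rightarrow> real" where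
  "walk_step V E \<gamma> f y = \<gamma> * f y + (\<Sum>x\<in>{x \<in> V. E x y}. f x * (1 - \<gamma>) / real (deg V E x))"

lemma walk_dist_Suc_eq_walk_step:
  "walk_dist V E \<gamma> w (Suc k) = walk_step V E \<gamma> (walk_dist V E \<gamma> w k)"
  by (simp add: walk_step_def fun_eq_iff)

lemma walk_step_add:
  "walk_step V E \<gamma> (\<lambda>x. f x + g x) y = walk_step V E \<gamma> f y + walk_step V E \<gamma> g y"
  unfolding walk_step_def by (simp add: distrib_left distrib_right add_divide_distrib sum.distrib)

lemma walk_step_scale: "walk_step V E \<gamma> (\<lambda>x. c * f x) y = c * walk_step V E \<gamma> f y"
  unfolding walk_step_def by (simp add: sum_distrib_left distrib_left mult.assoc)

lemma walk_step_cong: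
  assumes "y \<in> V" and "\<And>x. x \<in> V \<Longrightarrow> f x = g x"
  shows "walk_step V E \<gamma> f y = walk_step V E \<gamma> g y"
  using assms by (simp add: walk_step_def)

lemma walk_step_outside:
  assumes "fin_conn_simple_graph V E" and "y \<notin> V"
  shows "walk_step V E \<gamma> f y = \<gamma> * f y"
proof -
  have no_in_edges: "{x \<in> V. E x y} = {}"
    using fin_conn_simple_graphD(3)[OF assms(1)] assms(2) by blast
  show ?thesis unfolding walk_step_def no_in_edges by simp
qed

lemma walk_dist_nonneg:
  assumes "0 \<le> \<gamma>" and "\<gamma> \<le> 1"
  shows "0 \<le> walk_dist V E \<gamma> w k y"
  using assms
  by (induction k arbitrary: y)
    (auto intro!: add_nonneg_nonneg mult_nonneg_nonneg sum_nonneg divide_nonneg_nonneg)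

lemma walk_dist_outside:
  assumes G: "fin_conn_simple_graph V E" and "w \<in> V" and "y \<notin> V"
  shows "walk_dist V E \<gamma> w k y = 0"
proof (induction k)
  case 0
  then show ?case using assms by auto
next
  case (Suc k)
  then show ?case
    by (simp add: walk_dist_Suc_eq_walk_step walk_step_outside[OF G \<open>y \<notin> V\<close>] del: walk_dist.simps)
qed

lemma sum_walk_step:
  assumes G: "fin_conn_simple_graph V E" and pos: "\<forall>x\<in>V. 0 < deg V E x"
  shows "(\<Sum>y\<in>V. walk_step V E \<gamma> f y) = (\<Sum>y\<in>V. f y)"
proof -
  have fin: "finite V" using fin_conn_simple_graphD(1)[OF G] .
  define out where "out x = f x * (1 - \<gamma>) / real (deg V E x)" for x
  have "(\<Sum>y\<in>V. \<Sum>x\<in>{x \<in> V. E x y}. out x) = (\<Sum>y\<in>V. \<Sum>x\<in>V. if E x y then out x else 0)"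
    using fin by (simp add: sum.inter_filter)
  also have "\<dots> = (\<Sum>x\<in>V. \<Sum>y\<in>V. if E x y then out x else 0)"
    by (rule sum.swap)
  also have "\<dots> = (\<Sum>x\<in>V. real (deg V E x) * out x)"
    by (intro sum.cong refl) (simp add: deg_def sum.inter_filter[OF fin, symmetric])
  also have "\<dots> = (\<Sum>x\<in>V. (1 - \<gamma>) * f x)"
    using pos by (intro sum.cong refl) (simp add: out_def)
  finally have out_total: "(\<Sum>y\<in>V. \<Sum>x\<in>{x \<in> V. E x y}. out x) = (1 - \<gamma>) * (\<Sum>y\<in>V. f y)"
    by (simp add: sum_distrib_left)
  have "(\<Sum>y\<in>V. walk_step V E \<gamma> f y) = \<gamma> * (\<Sum>y\<in>V. f y) + (\<Sum>y\<in>V. \<Sum>x\<in>{x \<in> V. E x y}. out x)"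
    unfolding walk_step_def out_def[symmetric] by (simp add: sum.distrib sum_distrib_left)
  then show ?thesis unfolding out_total by (simp add: algebra_simps)
qed

lemma sum_walk_dist:
  assumes G: "fin_conn_simple_graph V E" and pos: "\<forall>x\<in>V. 0 < deg V E x" and "w \<in> V"
  shows "(\<Sum>y\<in>V. walk_dist V E \<gamma> w k y) = 1"
proof (induction k)
  case 0
  then show ?case using assms fin_conn_simple_graphD(1)[OF G] by simp
next
  case (Suc k)
  then show ?case
    by (simp only: walk_dist_Suc_eq_walk_step sum_walk_step[OF G pos])
qed

lemma walk_step_weighted_sum:
  assumes "fin_conn_simple_graph V E"
  shows "(\<Sum>y\<in>V. walk_step V E \<gamma> f y * g y / deg V E y)
    = \<gamma> * (\<Sum>y\<in>V. f y * g y / deg V E y)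
      + (1 - \<gamma>) * (\<Sum>y\<in>V. \<Sum>x\<in>V. if E x y then f x * g y / (deg V E x * deg V E y) else 0)"
proof -
  have "(\<Sum>x\<in>{x \<in> V. E x y}. f x * (1 - \<gamma>) / deg V E x) * g y / deg V E y
      = (1 - \<gamma>) * (\<Sum>x\<in>V. if E x y then f x * g y / (deg V E x * deg V E y) else 0)" for y
    unfolding sum.inter_filter[OF fin_conn_simple_graphD(1)[OF assms]]
      sum_distrib_left sum_distrib_right sum_divide_distrib
    by (intro sum.cong refl) (simp add: of_nat_mult)
  then show ?thesis
    by (simp add: walk_step_def sum.distrib sum_distrib_left add_divide_distrib algebra_simps)
qed

lemma walk_step_self_adjoint:
  assumes "fin_conn_simple_graph V E"
  shows "(\<Sum>y\<in>V. walk_step V E \<gamma> f y * g y / deg V E y)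
    = (\<Sum>y\<in>V. f y * walk_step V E \<gamma> g y / deg V E y)"
proof -
  have "(\<Sum>y\<in>V. \<Sum>x\<in>V. if E x y then f x * g y / (deg V E x * deg V E y) else 0)
      = (\<Sum>y\<in>V. \<Sum>x\<in>V. if E x y then g x * f y / (deg V E x * deg V E y) else 0)"
    by (subst sum.swap) (auto intro!: sum.cong simp: fin_conn_simple_graphD(4)[OF assms] mult.commute)
  then show ?thesis
    using walk_step_weighted_sum[OF assms, of \<gamma> f g] walk_step_weighted_sum[OF assms, of \<gamma> g f]
    by (simp add: mult.commute)
qed

lemma walk_step_twice_eq_0:
  assumes G: "fin_conn_simple_graph V E" and pos: "\<forall>x\<in>V. 0 < deg V E x"
    and twice: "\<forall>y\<in>V. walk_step V E \<gamma> (walk_step V E \<gamma> f) y = 0" and "y \<in> V"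
  shows "walk_step V E \<gamma> f y = 0"
proof -
  define h where "h = walk_step V E \<gamma> f"
  have "(\<Sum>x\<in>V. h x * h x / deg V E x) = (\<Sum>x\<in>V. f x * walk_step V E \<gamma> h x / deg V E x)"
    unfolding h_def by (rule walk_step_self_adjoint[OF G])
  also have "\<dots> = 0" using twice by (simp add: h_def)
  finally have "(\<Sum>x\<in>V. h x * h x / deg V E x) = 0" .
  then have "h y * h y / deg V E y = 0"
    using fin_conn_simple_graphD(1)[OF G] \<open>y \<in> V\<close> by (subst (asm) sum_nonneg_eq_0_iff) auto
  moreover have "deg V E y \<noteq> 0" using pos \<open>y \<in> V\<close> by simp
  ultimately show ?thesis by (simp add: h_def)
qed

(* The alpha-walk runs on True \<times> V and the beta-walk on False \<times> V; cutting off the values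
   outside V keeps the range finite-dimensional. *)
definition pair_walk_step ::
  "'a set \<Rightarrow> ('a \<Rightarrow> 'a \<Rightarrow> bool) \<Rightarrow> real \<Rightarrow> real \<Rightarrow> (bool \<times> 'a \<Rightarrow> real) \<Rightarrow> bool \<times> 'a \<Rightarrow> real" where
  "pair_walk_step V E \<alpha> \<beta> F = (\<lambda>(b, y).
     if y \<in> V then walk_step V E (if b then \<alpha> else \<beta>) (\<lambda>x. F (b, x)) y else 0)"

lemma linear_pair_walk_step: "Vector_Spaces.linear fun_scale fun_scale (pair_walk_step V E \<alpha> \<beta>)"
  unfolding Vector_Spaces.linear_iff
  by (simp add: fun_space.vector_space_axioms pair_walk_step_def fun_scale_def fun_eq_iff
      walk_step_add walk_step_scale split_beta)

lemma range_pair_walk_step: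
  assumes "fin_conn_simple_graph V E"
  shows "range (pair_walk_step V E \<alpha> \<beta>)
    \<subseteq> fun_space.span ((\<lambda>s p. if p = s then 1 else 0) ` (UNIV \<times> V))"
  using fin_conn_simple_graphD(1)[OF assms]
  by (auto intro!: in_span_deltas simp: pair_walk_step_def split: if_splits)

lemma pair_walk_step_twice_eq_0:
  assumes G: "fin_conn_simple_graph V E" and pos: "\<forall>x\<in>V. 0 < deg V E x"
    and twice: "pair_walk_step V E \<alpha> \<beta> (pair_walk_step V E \<alpha> \<beta> F) = 0"
  shows "pair_walk_step V E \<alpha> \<beta> F = 0"
proof
  fix p :: "bool \<times> 'a"
  obtain b y where p: "p = (b, y)" by (cases p)
  define \<gamma> where "\<gamma> = (if b then \<alpha> else \<beta>)"
  have "\<forall>y\<in>V. walk_step V E \<gamma> (walk_step V E \<gamma> (\<lambda>x. F (b, x))) y = 0"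
  proof
    fix y assume "y \<in> V"
    have "walk_step V E \<gamma> (\<lambda>x. pair_walk_step V E \<alpha> \<beta> F (b, x)) y = 0"
      using fun_cong[OF twice, of "(b, y)"] \<open>y \<in> V\<close> by (simp add: pair_walk_step_def \<gamma>_def)
    moreover have "walk_step V E \<gamma> (\<lambda>x. pair_walk_step V E \<alpha> \<beta> F (b, x)) y
        = walk_step V E \<gamma> (walk_step V E \<gamma> (\<lambda>x. F (b, x))) y"
      using \<open>y \<in> V\<close> by (intro walk_step_cong) (simp_all add: pair_walk_step_def \<gamma>_def)
    ultimately show "walk_step V E \<gamma> (walk_step V E \<gamma> (\<lambda>x. F (b, x))) y = 0" by simp
  qed
  then show "pair_walk_step V E \<alpha> \<beta> F p = 0 p"
    using walk_step_twice_eq_0[OF G pos] by (simp add: p pair_walk_step_def \<gamma>_def)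
qed

lemma pair_walk_step_orbit:
  fixes \<alpha> \<beta> :: real
  assumes G: "fin_conn_simple_graph V E" and "u \<in> V" and "v \<in> V"
  defines "walks k \<equiv> (\<lambda>(b, y). walk_dist V E (if b then \<alpha> else \<beta>) (if b then u else v) k y)"
  shows "(pair_walk_step V E \<alpha> \<beta> ^^ k) (walks 0) = walks k"
proof (induction k)
  case 0
  then show ?case by simp
next
  case (Suc k)
  have "pair_walk_step V E \<alpha> \<beta> (walks k) (b, y) = walks (Suc k) (b, y)" for b y
  proof (cases "y \<in> V")
    case True
    then show ?thesis
      by (simp add: pair_walk_step_def walks_def walk_dist_Suc_eq_walk_step del: walk_dist.simps)
  next
    case False
    then show ?thesis using assms by (simp add: pair_walk_step_def walks_def walk_dist_outside del: walk_dist.simps)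
  qed
  then show ?case by (auto simp: Suc)
qed

lemma walks_agree_from_one_if_agree_eventually:
  assumes G: "fin_conn_simple_graph V E" and pos: "\<forall>x\<in>V. 0 < deg V E x"
    and "u \<in> V" and "v \<in> V"
    and tail: "\<And>k. N \<le> k \<Longrightarrow> walk_dist V E \<alpha> u k = walk_dist V E \<beta> v k"
    and "0 < k"
  shows "walk_dist V E \<alpha> u k = walk_dist V E \<beta> v k"
proof
  fix y
  define walks where
    "walks k = (\<lambda>(b, y). walk_dist V E (if b then \<alpha> else \<beta>) (if b then u else v) k y)" for k
  define \<phi> where "\<phi> F = F (True, y) - F (False, y)" for F :: "bool \<times> 'a \<Rightarrow> real"
  have orbit: "(pair_walk_step V E \<alpha> \<beta> ^^ k) (walks 0) = walks k" for k
    unfolding walks_def by (rule pair_walk_step_orbit[OF G \<open>u \<in> V\<close> \<open>v \<in> V\<close>])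
  have "Vector_Spaces.linear fun_scale (*) \<phi>"
    unfolding Vector_Spaces.linear_iff \<phi>_def
    by (simp add: fun_space.vector_space_axioms vector_space_over_itself.vector_space_axioms
        fun_scale_def algebra_simps)
  moreover have "finite ((\<lambda>s p. if p = s then 1 else 0) ` (UNIV \<times> V) :: (bool \<times> 'a \<Rightarrow> real) set)"
    using fin_conn_simple_graphD(1)[OF G] by simp
  moreover have "\<phi> ((pair_walk_step V E \<alpha> \<beta> ^^ j) (walks 0)) = 0" if "N \<le> j" for j
    using tail[OF that] unfolding orbit by (simp add: walks_def \<phi>_def)
  ultimately have "\<phi> ((pair_walk_step V E \<alpha> \<beta> ^^ k) (walks 0)) = 0"
    using fun_space.orbit_functional_vanishes_if_eventually[OF linear_pair_walk_step _
        range_pair_walk_step[OF G] pair_walk_step_twice_eq_0[OF G pos]] \<open>0 < k\<close>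
    by blast
  then show "walk_dist V E \<alpha> u k y = walk_dist V E \<beta> v k y"
    unfolding orbit by (simp add: walks_def \<phi>_def)
qed

definition transport_cost :: "'a set \<Rightarrow> ('a \<Rightarrow> 'a \<Rightarrow> bool) \<Rightarrow> ('a \<times> 'a \<Rightarrow> real) \<Rightarrow> real" where
  "transport_cost V E \<pi> = (\<Sum>p\<in>V \<times> V. \<pi> p * real (gdist E (fst p) (snd p)))"

lemma wasserstein_eq_INF_transport_cost:
  "wasserstein V E \<mu> \<nu> = (INF \<pi>\<in>couplings V \<mu> \<nu>. transport_cost V E \<pi>)"
  by (simp add: wasserstein_def transport_cost_def)

lemma transport_cost_nonneg:
  assumes "\<pi> \<in> couplings V \<mu> \<nu>"
  shows "0 \<le> transport_cost V E \<pi>"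
  using assms unfolding couplings_def transport_cost_def by (auto intro!: sum_nonneg)

lemma gdist_self: "gdist E x x = 0"
  unfolding gdist_def by (rule Least_eq_0) simp

lemma gdist_ge_1:
  assumes G: "fin_conn_simple_graph V E" and "x \<in> V" and "y \<in> V" and "x \<noteq> y"
  shows "1 \<le> gdist E x y"
proof -
  obtain n where "(x, y) \<in> edge_rel E ^^ n"
    using fin_conn_simple_graphD(6)[OF G assms(2,3)] rtrancl_power by blast
  then have "(x, y) \<in> edge_rel E ^^ gdist E x y"
    unfolding gdist_def by (rule LeastI)
  with \<open>x \<noteq> y\<close> have "gdist E x y \<noteq> 0" by (metis relpow_0_E)
  then show ?thesis by simp
qed

lemma abs_diff_le_transport_cost:
  assumes G: "fin_conn_simple_graph V E" and \<pi>: "\<pi> \<in> couplings V \<mu> \<nu>" and "x \<in> V"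
  shows "\<bar>\<mu> x - \<nu> x\<bar> \<le> transport_cost V E \<pi>"
proof -
  have fin: "finite V" using fin_conn_simple_graphD(1)[OF G] .
  have nonneg: "0 \<le> \<pi> p" for p using \<pi> unfolding couplings_def by blast
  define off where "off a b = (if a = b then 0 else \<pi> (a, b))" for a b
  have off_nonneg: "0 \<le> off a b" for a b using nonneg by (simp add: off_def)
  have "off a b \<le> \<pi> (a, b) * real (gdist E a b)" if "a \<in> V" and "b \<in> V" for a b
    using gdist_ge_1[OF G that] nonneg[of "(a, b)"] mult_left_mono[of 1 "real (gdist E a b)" "\<pi> (a, b)"]
    by (simp add: off_def gdist_self)
  then have "(\<Sum>a\<in>V. \<Sum>b\<in>V. off a b) \<le> transport_cost V E \<pi>"
    unfolding transport_cost_def sum.cartesian_product by (auto intro!: sum_mono)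
  moreover have "(\<Sum>b\<in>V. off x b) \<le> (\<Sum>a\<in>V. \<Sum>b\<in>V. off a b)"
    using fin \<open>x \<in> V\<close> off_nonneg by (intro member_le_sum sum_nonneg) auto
  moreover have "(\<Sum>a\<in>V. off a x) \<le> (\<Sum>a\<in>V. \<Sum>b\<in>V. off a b)"
    using fin \<open>x \<in> V\<close> off_nonneg by (subst sum.swap) (intro member_le_sum sum_nonneg, auto)
  moreover have "\<mu> x = (\<Sum>b\<in>V. off x b) + \<pi> (x, x)"
  proof -
    have "\<mu> x = (\<Sum>b\<in>V. \<pi> (x, b))" using \<pi> \<open>x \<in> V\<close> unfolding couplings_def by simp
    also have "\<dots> = (\<Sum>b\<in>V. off x b + (if x = b then \<pi> (x, b) else 0))"
      by (intro sum.cong refl) (simp add: off_def)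
    finally show ?thesis using fin \<open>x \<in> V\<close> by (simp add: sum.distrib)
  qed
  moreover have "\<nu> x = (\<Sum>a\<in>V. off a x) + \<pi> (x, x)"
  proof -
    have "\<nu> x = (\<Sum>a\<in>V. \<pi> (a, x))" using \<pi> \<open>x \<in> V\<close> unfolding couplings_def by simp
    also have "\<dots> = (\<Sum>a\<in>V. off a x + (if a = x then \<pi> (a, x) else 0))"
      by (intro sum.cong refl) (simp add: off_def)
    finally show ?thesis using fin \<open>x \<in> V\<close> by (simp add: sum.distrib)
  qed
  moreover have "0 \<le> (\<Sum>b\<in>V. off x b)" "0 \<le> (\<Sum>a\<in>V. off a x)"
    using off_nonneg by (simp_all add: sum_nonneg)
  ultimately show ?thesis by linarith
qed

lemma abs_diff_le_wasserstein:
  assumes "fin_conn_simple_graph V E" and "couplings V \<mu> \<nu> \<noteq> {}" and "x \<in> V"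
  shows "\<bar>\<mu> x - \<nu> x\<bar> \<le> wasserstein V E \<mu> \<nu>"
  unfolding wasserstein_eq_INF_transport_cost
  using assms by (intro cINF_greatest abs_diff_le_transport_cost)

lemma wasserstein_self_eq_0:
  assumes G: "fin_conn_simple_graph V E" and nonneg: "\<forall>x\<in>V. 0 \<le> \<mu> x"
  shows "wasserstein V E \<mu> \<mu> = 0"
proof -
  have fin: "finite V" using fin_conn_simple_graphD(1)[OF G] .
  define diag where "diag = (\<lambda>(a, b). if a = b \<and> a \<in> V then \<mu> a else 0)"
  have diag: "diag \<in> couplings V \<mu> \<mu>"
    using fin nonneg unfolding couplings_def diag_def by (auto simp: if_distrib cong: if_cong)
  have "transport_cost V E diag = 0"
    unfolding transport_cost_def by (intro sum.neutral) (auto simp: diag_def gdist_self)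
  moreover have "bdd_below (transport_cost V E ` couplings V \<mu> \<mu>)"
    using transport_cost_nonneg by (intro bdd_belowI[of _ 0]) auto
  ultimately have "wasserstein V E \<mu> \<mu> \<le> 0"
    unfolding wasserstein_eq_INF_transport_cost by (metis cINF_lower diag)
  moreover have "0 \<le> wasserstein V E \<mu> \<mu>"
    unfolding wasserstein_eq_INF_transport_cost using diag
    by (intro cINF_greatest transport_cost_nonneg) auto
  ultimately show ?thesis by simp
qed

lemma couplings_nonempty:
  assumes "finite V" and "\<forall>x\<in>V. 0 \<le> \<mu> x" and "\<forall>x\<in>V. 0 \<le> \<nu> x"
    and "(\<Sum>x\<in>V. \<mu> x) = 1" and "(\<Sum>x\<in>V. \<nu> x) = 1"
  shows "couplings V \<mu> \<nu> \<noteq> {}"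
proof -
  define prod where "prod = (\<lambda>(a, b). if a \<in> V \<and> b \<in> V then \<mu> a * \<nu> b else 0)"
  have "prod \<in> couplings V \<mu> \<nu>"
    using assms unfolding couplings_def prod_def
    by (auto simp: sum_distrib_left[symmetric] sum_distrib_right[symmetric] cong: sum.cong)
  then show ?thesis by blast
qed

lemma walk_dists_eq_if_W_seq_eq_0:
  assumes G: "fin_conn_simple_graph V E" and pos: "\<forall>x\<in>V. 0 < deg V E x"
    and "u \<in> V" and "v \<in> V" and "0 \<le> \<alpha>" and "\<alpha> \<le> 1" and "0 \<le> \<beta>" and "\<beta> \<le> 1"
    and W0: "W_seq V E u v \<alpha> \<beta> k = 0"
  shows "walk_dist V E \<alpha> u k = walk_dist V E \<beta> v k"
proof
  fix y
  show "walk_dist V E \<alpha> u k y = walk_dist V E \<beta> v k y"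
  proof (cases "y \<in> V")
    case True
    have "couplings V (walk_dist V E \<alpha> u k) (walk_dist V E \<beta> v k) \<noteq> {}"
      using assms by (intro couplings_nonempty fin_conn_simple_graphD(1)[OF G] ballI walk_dist_nonneg
          sum_walk_dist[OF G pos])
    then have "\<bar>walk_dist V E \<alpha> u k y - walk_dist V E \<beta> v k y\<bar> \<le> W_seq V E u v \<alpha> \<beta> k"
      unfolding W_seq_def by (rule abs_diff_le_wasserstein[OF G _ True])
    then show ?thesis using W0 by simp
  next
    case False
    then show ?thesis using assms by (simp add: walk_dist_outside del: walk_dist.simps)
  qed
qed

lemma W_seq_vanishes_from_one:
  assumes G: "fin_conn_simple_graph V E" and pos: "\<forall>x\<in>V. 0 < deg V E x"
    and "u \<in> V" and "v \<in> V" and "0 \<le> \<alpha>" and "\<alpha> \<le> 1" and "0 \<le> \<beta>" and "\<beta> \<le> 1"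
    and tail: "\<And>k. N \<le> k \<Longrightarrow> W_seq V E u v \<alpha> \<beta> k = 0" and "0 < k"
  shows "W_seq V E u v \<alpha> \<beta> k = 0"
proof -
  have "walk_dist V E \<beta> v k = walk_dist V E \<alpha> u k"
    using G pos assms(3,4) walk_dists_eq_if_W_seq_eq_0[OF G pos assms(3-8) tail] \<open>0 < k\<close>
    by (rule walks_agree_from_one_if_agree_eventually[symmetric])
  then show ?thesis
    unfolding W_seq_def
    by (simp add: wasserstein_self_eq_0[OF G] walk_dist_nonneg assms(5,6) del: walk_dist.simps)
qed

lemma isolated_vertex_imp_singleton:
  assumes G: "fin_conn_simple_graph V E" and "x \<in> V" and "deg V E x = 0"
  shows "V = {x}"
proof -
  have no_edge: "\<not> E x y" for y
    using assms fin_conn_simple_graphD(1,3)[OF G] unfolding deg_def by auto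
  have "y = x" if "y \<in> V" for y
    using fin_conn_simple_graphD(6)[OF G \<open>x \<in> V\<close> that]
    by (cases rule: converse_rtranclE) (auto simp: edge_rel_def no_edge)
  then show ?thesis using \<open>x \<in> V\<close> by blast
qed

(* For alpha < beta the two walks lose mass at different rates, so for k >= 1 there is no coupling
   and every W_k is the same junk value Inf {}. *)
lemma W_seq_singleton_constant:
  assumes G: "fin_conn_simple_graph V E" and V: "V = {x}"
    and "0 \<le> \<alpha>" and "\<alpha> \<le> \<beta>"
  shows "\<forall>k\<ge>1. W_seq V E x x \<alpha> \<beta> k = W_seq V E x x \<alpha> \<beta> 1"
proof -
  have no_in_edges: "{z \<in> V. E z x} = {}"
    using V fin_conn_simple_graphD(2,5)[OF G] by blast
  have walk: "walk_dist V E \<gamma> x n x = \<gamma> ^ n" for \<gamma> n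
    by (induction n) (simp_all add: no_in_edges)
  show ?thesis
  proof (cases "\<alpha> = \<beta>")
    case True
    have "W_seq V E x x \<alpha> \<beta> n = 0" for n
      unfolding W_seq_def True using V walk \<open>0 \<le> \<alpha>\<close> True
      by (intro wasserstein_self_eq_0[OF G]) simp
    then show ?thesis by presburger
  next
    case False
    have no_coupling: "couplings V (walk_dist V E \<alpha> x n) (walk_dist V E \<beta> x n) = {}"
      if "1 \<le> n" for n
    proof (rule ccontr)
      assume "couplings V (walk_dist V E \<alpha> x n) (walk_dist V E \<beta> x n) \<noteq> {}"
      then obtain \<pi> where \<pi>: "\<pi> \<in> couplings V (walk_dist V E \<alpha> x n) (walk_dist V E \<beta> x n)"
        by blast
      have "(\<Sum>y\<in>V. \<pi> (x, y)) = walk_dist V E \<alpha> x n x" "(\<Sum>y\<in>V. \<pi> (y, x)) = walk_dist V E \<beta> x n x"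
        using \<pi> V unfolding couplings_def by auto
      then have "\<alpha> ^ n = \<beta> ^ n" unfolding walk by (simp add: V)
      moreover have "\<alpha> ^ n < \<beta> ^ n"
        using False assms that by (intro power_strict_mono) auto
      ultimately show False by simp
    qed
    show ?thesis
    proof (intro allI impI)
      fix k :: nat
      assume "1 \<le> k"
      show "W_seq V E x x \<alpha> \<beta> k = W_seq V E x x \<alpha> \<beta> 1"
        unfolding W_seq_def wasserstein_def no_coupling[OF \<open>1 \<le> k\<close>] no_coupling[OF order_refl] ..
    qed
  qed
qed

lemma eventually_constant_eq_limit:
  fixes X :: "nat \<Rightarrow> 'a::t2_space"
  assumes "X \<longlonglongrightarrow> L" and const: "\<forall>k\<ge>N. X k = X N" and "N \<le> k"
  shows "X k = L"
proof -
  have "(\<lambda>k. X (k + N)) \<longlonglongrightarrow> L"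
    using assms(1) by (rule LIMSEQ_ignore_initial_segment)
  moreover have "(\<lambda>k. X (k + N)) = (\<lambda>k. X N)"
    by (intro ext const[rule_format]) simp
  ultimately have "X N = L" by (simp add: LIMSEQ_const_iff)
  with const[rule_format, OF \<open>N \<le> k\<close>] show ?thesis by (rule trans)
qed

theorem lemma6p5:
  fixes V :: "'a set" and E :: "'a \<Rightarrow> 'a \<Rightarrow> bool" and u v :: 'a and \<alpha> \<beta> :: real
  assumes "fin_conn_simple_graph V E"
    and "u \<in> V" and "v \<in> V"
    and "0 \<le> \<alpha>" and "\<alpha> \<le> \<beta>" and "\<beta> \<le> 1"
    and "W_seq V E u v \<alpha> \<beta> \<longlonglongrightarrow> 0"
    and "\<exists>N. \<forall>k\<ge>N. W_seq V E u v \<alpha> \<beta> k = W_seq V E u v \<alpha> \<beta> N"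
  shows "\<forall>k\<ge>1. W_seq V E u v \<alpha> \<beta> k = W_seq V E u v \<alpha> \<beta> 1"
proof -
  note G = assms(1)
  obtain N where const: "\<forall>k\<ge>N. W_seq V E u v \<alpha> \<beta> k = W_seq V E u v \<alpha> \<beta> N"
    using assms(8) by blast
  have tail: "W_seq V E u v \<alpha> \<beta> k = 0" if "N \<le> k" for k
    using assms(7) const that by (rule eventually_constant_eq_limit)
  show ?thesis
  proof (cases "\<exists>x\<in>V. deg V E x = 0")
    case True
    then obtain x where V: "V = {x}" using isolated_vertex_imp_singleton[OF G] by blast
    have "u = x" and "v = x" using assms(2,3) V by auto
    then show ?thesis using W_seq_singleton_constant[OF G V assms(4,5)] by blast
  next
    case False
    then have pos: "\<forall>x\<in>V. 0 < deg V E x" by auto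
    have "W_seq V E u v \<alpha> \<beta> k = 0" if "1 \<le> k" for k
      using assms(4-6) that by (intro W_seq_vanishes_from_one[OF G pos assms(2,3) _ _ _ _ tail]) auto
    then show ?thesis by simp
  qed
qed

end
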